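(* Let $\mathcal{O}$ be a strict monoidal category and $\mathcal{B}$ a strict left $\mathcal{O}$-module category. Then the category $\bar{\mathcal{O}}_{\triangleright\mathcal{B}}$ is a monoidal category with respect to the tensor product equal to that of $\mathcal{O}$ on objects and defined on morphisms by $$(\phi\bar\otimes\psi)_X:=(\mathrm{id}_C\otimes\psi_X)\circ\phi_{B\otimes X}=\phi_{D\otimes X}\circ(\mathrm{id}_A\otimes\psi_X)$$ for $\phi\in\mathrm{Hom}_{\bar{\mathcal{O}}_{\triangleright\mathcal{B}}}(A,C)$, $\psi\in\mathrm{Hom}_{\bar{\mathcal{O}}_{\triangleright\mathcal{B}}}(B,D)$, $X\in\mathrm{Ob}\,\mathcal{B}$.
   Context: The action of $\mathcal{O}$ on $\mathcal{B}$ and the tensor product of $\mathcal{O}$ are both written $\otimes$ (with trivial associativity constraints). $\bar{\mathcal{O}}_{\triangleright\mathcal{B}}$ has the objects of $\mathcal{O}$; a morphism $\phi\colon A\to B$ is a family $\{\phi_X\}_{X\in\mathrm{Ob}\,\mathcal{B}}$ of morphisms $\phi_X\in\mathrm{Hom}_\mathcal{B}(A\otimes X,B\otimes X)$ such that $\phi_X\circ(\mathrm{id}_A\otimes\xi)=(\mathrm{id}_B\otimes\xi)\circ\phi_{X'}$ for all $\xi\in\mathrm{Hom}_\mathcal{B}(X',X)$; composition is pointwise, $(\phi\circ\psi)_X=\phi_X\circ\psi_X$. *)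

theory Defs
  imports Main
begin

definition category ::
  "'o set \<Rightarrow> ('o \<Rightarrow> 'o \<Rightarrow> 'm set) \<Rightarrow> ('m \<Rightarrow> 'm \<Rightarrow> 'm) \<Rightarrow> ('o \<Rightarrow> 'm) \<Rightarrow> bool" where
  "category Ob Hom cmp idm \<longleftrightarrow>
     (\<forall>A\<in>Ob. idm A \<in> Hom A A) \<and>
     (\<forall>A\<in>Ob. \<forall>B\<in>Ob. \<forall>C\<in>Ob. \<forall>f\<in>Hom A B. \<forall>g\<in>Hom B C. cmp g f \<in> Hom A C) \<and>
     (\<forall>A\<in>Ob. \<forall>B\<in>Ob. \<forall>f\<in>Hom A B. cmp f (idm A) = f \<and> cmp (idm B) f = f) \<and>
     (\<forall>A\<in>Ob. \<forall>B\<in>Ob. \<forall>C\<in>Ob. \<forall>D\<in>Ob. \<forall>f\<in>Hom A B. \<forall>g\<in>Hom B C. \<forall>h\<in>Hom C D.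
        cmp h (cmp g f) = cmp (cmp h g) f)"

definition strict_monoidal ::
  "'o set \<Rightarrow> ('o \<Rightarrow> 'o \<Rightarrow> 'm set) \<Rightarrow> ('m \<Rightarrow> 'm \<Rightarrow> 'm) \<Rightarrow> ('o \<Rightarrow> 'm)
   \<Rightarrow> ('o \<Rightarrow> 'o \<Rightarrow> 'o) \<Rightarrow> ('m \<Rightarrow> 'm \<Rightarrow> 'm) \<Rightarrow> 'o \<Rightarrow> bool" where
  "strict_monoidal Ob Hom cmp idm tens tensm I \<longleftrightarrow>
     category Ob Hom cmp idm \<and> I \<in> Ob \<and>
     (\<forall>A\<in>Ob. \<forall>B\<in>Ob. tens A B \<in> Ob) \<and>
     (\<forall>A\<in>Ob. \<forall>B\<in>Ob. \<forall>C\<in>Ob. \<forall>D\<in>Ob. \<forall>f\<in>Hom A C. \<forall>g\<in>Hom B D.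
        tensm f g \<in> Hom (tens A B) (tens C D)) \<and>
     (\<forall>A\<in>Ob. \<forall>B\<in>Ob. tensm (idm A) (idm B) = idm (tens A B)) \<and>
     (\<forall>A\<in>Ob. \<forall>B\<in>Ob. \<forall>C\<in>Ob. \<forall>D\<in>Ob. \<forall>E\<in>Ob. \<forall>F\<in>Ob.
        \<forall>f\<in>Hom A C. \<forall>f'\<in>Hom C E. \<forall>g\<in>Hom B D. \<forall>g'\<in>Hom D F.
        tensm (cmp f' f) (cmp g' g) = cmp (tensm f' g') (tensm f g)) \<and>
     (\<forall>A\<in>Ob. \<forall>B\<in>Ob. \<forall>C\<in>Ob. tens (tens A B) C = tens A (tens B C)) \<and>
     (\<forall>A\<in>Ob. tens I A = A \<and> tens A I = A) \<and>
     (\<forall>A\<in>Ob. \<forall>A'\<in>Ob. \<forall>B\<in>Ob. \<forall>B'\<in>Ob. \<forall>C\<in>Ob. \<forall>C'\<in>Ob.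
        \<forall>f\<in>Hom A A'. \<forall>g\<in>Hom B B'. \<forall>h\<in>Hom C C'.
        tensm (tensm f g) h = tensm f (tensm g h)) \<and>
     (\<forall>A\<in>Ob. \<forall>B\<in>Ob. \<forall>f\<in>Hom A B. tensm (idm I) f = f \<and> tensm f (idm I) = f)"

definition strict_left_module ::
  "'o set \<Rightarrow> ('o \<Rightarrow> 'o \<Rightarrow> 'm set) \<Rightarrow> ('m \<Rightarrow> 'm \<Rightarrow> 'm) \<Rightarrow> ('o \<Rightarrow> 'm)
   \<Rightarrow> ('o \<Rightarrow> 'o \<Rightarrow> 'o) \<Rightarrow> ('m \<Rightarrow> 'm \<Rightarrow> 'm) \<Rightarrow> 'o
   \<Rightarrow> 'b set \<Rightarrow> ('b \<Rightarrow> 'b \<Rightarrow> 'n set) \<Rightarrow> ('n \<Rightarrow> 'n \<Rightarrow> 'n) \<Rightarrow> ('b \<Rightarrow> 'n)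
   \<Rightarrow> ('o \<Rightarrow> 'b \<Rightarrow> 'b) \<Rightarrow> ('m \<Rightarrow> 'n \<Rightarrow> 'n) \<Rightarrow> bool" where
  "strict_left_module ObO HomO compO idO tensO tensmO I ObB HomB compB idB act actm \<longleftrightarrow>
     strict_monoidal ObO HomO compO idO tensO tensmO I \<and>
     category ObB HomB compB idB \<and>
     (\<forall>A\<in>ObO. \<forall>X\<in>ObB. act A X \<in> ObB) \<and>
     (\<forall>A\<in>ObO. \<forall>C\<in>ObO. \<forall>X\<in>ObB. \<forall>Y\<in>ObB. \<forall>f\<in>HomO A C. \<forall>\<xi>\<in>HomB X Y.
        actm f \<xi> \<in> HomB (act A X) (act C Y)) \<and>
     (\<forall>A\<in>ObO. \<forall>X\<in>ObB. actm (idO A) (idB X) = idB (act A X)) \<and>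
     (\<forall>A\<in>ObO. \<forall>C\<in>ObO. \<forall>E\<in>ObO. \<forall>X\<in>ObB. \<forall>Y\<in>ObB. \<forall>Z\<in>ObB.
        \<forall>f\<in>HomO A C. \<forall>f'\<in>HomO C E. \<forall>\<xi>\<in>HomB X Y. \<forall>\<xi>'\<in>HomB Y Z.
        actm (compO f' f) (compB \<xi>' \<xi>) = compB (actm f' \<xi>') (actm f \<xi>)) \<and>
     (\<forall>A\<in>ObO. \<forall>B\<in>ObO. \<forall>X\<in>ObB. act (tensO A B) X = act A (act B X)) \<and>
     (\<forall>X\<in>ObB. act I X = X) \<and>
     (\<forall>A\<in>ObO. \<forall>A'\<in>ObO. \<forall>B\<in>ObO. \<forall>B'\<in>ObO. \<forall>X\<in>ObB. \<forall>X'\<in>ObB.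
        \<forall>f\<in>HomO A A'. \<forall>g\<in>HomO B B'. \<forall>\<xi>\<in>HomB X X'.
        actm (tensmO f g) \<xi> = actm f (actm g \<xi>)) \<and>
     (\<forall>X\<in>ObB. \<forall>Y\<in>ObB. \<forall>\<xi>\<in>HomB X Y. actm (idO I) \<xi> = \<xi>)"

text \<open>A morphism A \<rightarrow> C is represented as the triple (A, C, \<phi>)
  where \<phi> is the family (\<phi>_X)_{X \<in> Ob B}, extended by undefined outside Ob B.\<close>
definition barHom ::
  "'b set \<Rightarrow> ('b \<Rightarrow> 'b \<Rightarrow> 'n set) \<Rightarrow> ('n \<Rightarrow> 'n \<Rightarrow> 'n) \<Rightarrow> ('o \<Rightarrow> 'm)
   \<Rightarrow> ('o \<Rightarrow> 'b \<Rightarrow> 'b) \<Rightarrow> ('m \<Rightarrow> 'n \<Rightarrow> 'n) \<Rightarrow> 'o \<Rightarrow> 'o \<Rightarrow> ('o \<times> 'o \<times> ('b \<Rightarrow> 'n)) set" where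
  "barHom ObB HomB compB idO act actm A C =
     {(A, C, \<phi>) | \<phi>.
        (\<forall>X\<in>ObB. \<phi> X \<in> HomB (act A X) (act C X)) \<and>
        (\<forall>X\<in>ObB. \<forall>X'\<in>ObB. \<forall>\<xi>\<in>HomB X' X.
           compB (\<phi> X) (actm (idO A) \<xi>) = compB (actm (idO C) \<xi>) (\<phi> X')) \<and>
        (\<forall>X. X \<notin> ObB \<longrightarrow> \<phi> X = undefined)}"

definition barComp ::
  "'b set \<Rightarrow> ('n \<Rightarrow> 'n \<Rightarrow> 'n)
   \<Rightarrow> ('o \<times> 'o \<times> ('b \<Rightarrow> 'n)) \<Rightarrow> ('o \<times> 'o \<times> ('b \<Rightarrow> 'n)) \<Rightarrow> ('o \<times> 'o \<times> ('b \<Rightarrow> 'n))" where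
  "barComp ObB compB f g =
     (fst g, fst (snd f),
      \<lambda>X. if X \<in> ObB then compB (snd (snd f) X) (snd (snd g) X) else undefined)"

definition barId ::
  "'b set \<Rightarrow> ('b \<Rightarrow> 'n) \<Rightarrow> ('o \<Rightarrow> 'b \<Rightarrow> 'b) \<Rightarrow> 'o \<Rightarrow> ('o \<times> 'o \<times> ('b \<Rightarrow> 'n))" where
  "barId ObB idB act A = (A, A, \<lambda>X. if X \<in> ObB then idB (act A X) else undefined)"

definition barTens ::
  "'b set \<Rightarrow> ('n \<Rightarrow> 'n \<Rightarrow> 'n) \<Rightarrow> ('o \<Rightarrow> 'm) \<Rightarrow> ('o \<Rightarrow> 'o \<Rightarrow> 'o)
   \<Rightarrow> ('o \<Rightarrow> 'b \<Rightarrow> 'b) \<Rightarrow> ('m \<Rightarrow> 'n \<Rightarrow> 'n)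
   \<Rightarrow> ('o \<times> 'o \<times> ('b \<Rightarrow> 'n)) \<Rightarrow> ('o \<times> 'o \<times> ('b \<Rightarrow> 'n)) \<Rightarrow> ('o \<times> 'o \<times> ('b \<Rightarrow> 'n))" where
  "barTens ObB compB idO tensO act actm f g =
     (case f of (A, C, \<phi>) \<Rightarrow> case g of (B, D, \<psi>) \<Rightarrow>
       (tensO A B, tensO C D,
        \<lambda>X. if X \<in> ObB then compB (actm (idO C) (\<psi> X)) (\<phi> (act B X)) else undefined))"

end

(*
  A morphism A \<rightarrow> C of the category \<bar>O_{\<triangleright>B} is precisely a natural transformation
  between the endofunctors A \<otimes> - and C \<otimes> - of B (both acting on morphisms by id \<otimes> -).
  Because the action is strict, (A \<otimes> B) \<otimes> - is the composite of A \<otimes> - and B \<otimes> -, and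
  I \<otimes> - is the identity functor. Under this reading composition is vertical composition and
  the tensor product is horizontal composition of natural transformations, whose two textbook
  formulas agree by naturality. The monoidal axioms are then the familiar facts about
  endofunctors and natural transformations: vertical composition is a category, horizontal
  composition is associative and unital, and the two satisfy the interchange law.
*)
theory Submission
  imports Defs "HOL-Library.FuncSet"
begin

locale cat =
  fixes Ob :: "'b set" and Hom :: "'b \<Rightarrow> 'b \<Rightarrow> 'n set"
    and cmp :: "'n \<Rightarrow> 'n \<Rightarrow> 'n" and idm :: "'b \<Rightarrow> 'n"
  assumes category: "category Ob Hom cmp idm"
begin

lemma id_hom: "X \<in> Ob \<Longrightarrow> idm X \<in> Hom X X"
  using category unfolding category_def by blast

lemma comp_hom: "\<lbrakk>X \<in> Ob; Y \<in> Ob; Z \<in> Ob; f \<in> Hom X Y; g \<in> Hom Y Z\<rbrakk> \<Longrightarrow> cmp g f \<in> Hom X Z"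
  using category unfolding category_def by blast

lemma comp_id_right: "\<lbrakk>f \<in> Hom X Y; X \<in> Ob; Y \<in> Ob\<rbrakk> \<Longrightarrow> cmp f (idm X) = f"
  using category unfolding category_def by blast

lemma comp_id_left: "\<lbrakk>f \<in> Hom X Y; X \<in> Ob; Y \<in> Ob\<rbrakk> \<Longrightarrow> cmp (idm Y) f = f"
  using category unfolding category_def by blast

lemma comp_assoc:
  "\<lbrakk>X \<in> Ob; Y \<in> Ob; Z \<in> Ob; W \<in> Ob; f \<in> Hom X Y; g \<in> Hom Y Z; h \<in> Hom Z W\<rbrakk>
   \<Longrightarrow> cmp h (cmp g f) = cmp (cmp h g) f"
  using category unfolding category_def by blast

definition endofunctor :: "('b \<Rightarrow> 'b) \<Rightarrow> ('n \<Rightarrow> 'n) \<Rightarrow> bool" where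
  "endofunctor F Fm \<longleftrightarrow>
     (\<forall>X\<in>Ob. F X \<in> Ob) \<and>
     (\<forall>X\<in>Ob. \<forall>Y\<in>Ob. \<forall>\<xi>\<in>Hom X Y. Fm \<xi> \<in> Hom (F X) (F Y)) \<and>
     (\<forall>X\<in>Ob. Fm (idm X) = idm (F X)) \<and>
     (\<forall>X\<in>Ob. \<forall>Y\<in>Ob. \<forall>Z\<in>Ob. \<forall>\<xi>\<in>Hom X Y. \<forall>\<eta>\<in>Hom Y Z. Fm (cmp \<eta> \<xi>) = cmp (Fm \<eta>) (Fm \<xi>))"

definition natural :: "('b \<Rightarrow> 'b) \<Rightarrow> ('n \<Rightarrow> 'n) \<Rightarrow> ('b \<Rightarrow> 'b) \<Rightarrow> ('n \<Rightarrow> 'n) \<Rightarrow> ('b \<Rightarrow> 'n) \<Rightarrow> bool" where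
  "natural F Fm G Gm \<phi> \<longleftrightarrow>
     (\<forall>X\<in>Ob. \<phi> X \<in> Hom (F X) (G X)) \<and>
     (\<forall>X\<in>Ob. \<forall>X'\<in>Ob. \<forall>\<xi>\<in>Hom X' X. cmp (\<phi> X) (Fm \<xi>) = cmp (Gm \<xi>) (\<phi> X'))"

lemma endofunctor_ob: "\<lbrakk>endofunctor F Fm; X \<in> Ob\<rbrakk> \<Longrightarrow> F X \<in> Ob"
  unfolding endofunctor_def by blast

lemma endofunctor_hom: "\<lbrakk>endofunctor F Fm; X \<in> Ob; Y \<in> Ob; \<xi> \<in> Hom X Y\<rbrakk> \<Longrightarrow> Fm \<xi> \<in> Hom (F X) (F Y)"
  unfolding endofunctor_def by blast

lemma endofunctor_id: "\<lbrakk>endofunctor F Fm; X \<in> Ob\<rbrakk> \<Longrightarrow> Fm (idm X) = idm (F X)"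
  unfolding endofunctor_def by blast

lemma endofunctor_comp:
  "\<lbrakk>endofunctor F Fm; X \<in> Ob; Y \<in> Ob; Z \<in> Ob; \<xi> \<in> Hom X Y; \<eta> \<in> Hom Y Z\<rbrakk>
   \<Longrightarrow> Fm (cmp \<eta> \<xi>) = cmp (Fm \<eta>) (Fm \<xi>)"
  unfolding endofunctor_def by blast

lemma natural_hom: "\<lbrakk>natural F Fm G Gm \<phi>; X \<in> Ob\<rbrakk> \<Longrightarrow> \<phi> X \<in> Hom (F X) (G X)"
  unfolding natural_def by blast

lemma natural_commute:
  "\<lbrakk>natural F Fm G Gm \<phi>; X \<in> Ob; X' \<in> Ob; \<xi> \<in> Hom X' X\<rbrakk>
   \<Longrightarrow> cmp (\<phi> X) (Fm \<xi>) = cmp (Gm \<xi>) (\<phi> X')"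
  unfolding natural_def by blast

lemma natural_cong:
  assumes "natural F Fm G Gm \<phi>"
    and "\<And>X. X \<in> Ob \<Longrightarrow> F X = F' X" "\<And>X. X \<in> Ob \<Longrightarrow> G X = G' X"
    and "\<And>X Y \<xi>. \<lbrakk>X \<in> Ob; Y \<in> Ob; \<xi> \<in> Hom X Y\<rbrakk> \<Longrightarrow> Fm \<xi> = Fm' \<xi>"
    and "\<And>X Y \<xi>. \<lbrakk>X \<in> Ob; Y \<in> Ob; \<xi> \<in> Hom X Y\<rbrakk> \<Longrightarrow> Gm \<xi> = Gm' \<xi>"
  shows "natural F' Fm' G' Gm' \<phi>"
  using assms unfolding natural_def by metis

lemma natural_restrict: "natural F Fm G Gm (restrict \<phi> Ob) \<longleftrightarrow> natural F Fm G Gm \<phi>"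
  by (simp add: natural_def)

lemma natural_identity:
  assumes "endofunctor F Fm"
  shows "natural F Fm F Fm (\<lambda>X. idm (F X))"
  unfolding natural_def
proof (intro conjI ballI)
  fix X X' \<xi> assume "X \<in> Ob" "X' \<in> Ob" "\<xi> \<in> Hom X' X"
  with assms have "F X \<in> Ob" "F X' \<in> Ob" "Fm \<xi> \<in> Hom (F X') (F X)"
    by (simp_all add: endofunctor_ob endofunctor_hom)
  then show "cmp (idm (F X)) (Fm \<xi>) = cmp (Fm \<xi>) (idm (F X'))"
    by (simp add: comp_id_left comp_id_right)
qed (use assms id_hom endofunctor_ob in blast)

lemma natural_vcomp_id_left:
  "\<lbrakk>natural F Fm G Gm \<phi>; endofunctor F Fm; endofunctor G Gm; X \<in> Ob\<rbrakk> \<Longrightarrow> cmp (idm (G X)) (\<phi> X) = \<phi> X"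
  by (meson comp_id_left endofunctor_ob natural_hom)

lemma natural_vcomp_id_right:
  "\<lbrakk>natural F Fm G Gm \<phi>; endofunctor F Fm; endofunctor G Gm; X \<in> Ob\<rbrakk> \<Longrightarrow> cmp (\<phi> X) (idm (F X)) = \<phi> X"
  by (meson comp_id_right endofunctor_ob natural_hom)

lemma natural_vcomp_assoc:
  "\<lbrakk>natural F Fm G Gm \<phi>; natural G Gm H Hm \<psi>; natural H Hm K Km \<chi>;
    endofunctor F Fm; endofunctor G Gm; endofunctor H Hm; endofunctor K Km; X \<in> Ob\<rbrakk>
   \<Longrightarrow> cmp (\<chi> X) (cmp (\<psi> X) (\<phi> X)) = cmp (cmp (\<chi> X) (\<psi> X)) (\<phi> X)"
  by (meson comp_assoc endofunctor_ob natural_hom)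

lemma natural_vcomp:
  assumes F: "endofunctor F Fm" and G: "endofunctor G Gm" and H: "endofunctor H Hm"
    and \<phi>: "natural F Fm G Gm \<phi>" and \<psi>: "natural G Gm H Hm \<psi>"
  shows "natural F Fm H Hm (\<lambda>X. cmp (\<psi> X) (\<phi> X))"
  unfolding natural_def
proof (intro conjI ballI)
  fix X assume "X \<in> Ob"
  then show "cmp (\<psi> X) (\<phi> X) \<in> Hom (F X) (H X)"
    by (meson comp_hom endofunctor_ob natural_hom F G H \<phi> \<psi>)
next
  fix X X' \<xi> assume X: "X \<in> Ob" "X' \<in> Ob" and \<xi>: "\<xi> \<in> Hom X' X"
  have ob: "F X \<in> Ob" "F X' \<in> Ob" "G X \<in> Ob" "G X' \<in> Ob" "H X \<in> Ob" "H X' \<in> Ob"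
    using X F G H by (blast intro: endofunctor_ob)+
  have hom: "\<phi> X \<in> Hom (F X) (G X)" "\<phi> X' \<in> Hom (F X') (G X')"
    "\<psi> X \<in> Hom (G X) (H X)" "\<psi> X' \<in> Hom (G X') (H X')"
    "Fm \<xi> \<in> Hom (F X') (F X)" "Gm \<xi> \<in> Hom (G X') (G X)" "Hm \<xi> \<in> Hom (H X') (H X)"
    using X \<xi> F G H \<phi> \<psi> by (blast intro: natural_hom endofunctor_hom)+
  have "cmp (cmp (\<psi> X) (\<phi> X)) (Fm \<xi>) = cmp (\<psi> X) (cmp (\<phi> X) (Fm \<xi>))"
    using ob hom by (simp add: comp_assoc)
  also have "\<dots> = cmp (\<psi> X) (cmp (Gm \<xi>) (\<phi> X'))"
    using X \<xi> \<phi> by (simp add: natural_commute)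
  also have "\<dots> = cmp (cmp (\<psi> X) (Gm \<xi>)) (\<phi> X')"
    using ob hom by (simp add: comp_assoc)
  also have "\<dots> = cmp (cmp (Hm \<xi>) (\<psi> X')) (\<phi> X')"
    using X \<xi> \<psi> by (simp add: natural_commute)
  also have "\<dots> = cmp (Hm \<xi>) (cmp (\<psi> X') (\<phi> X'))"
    using ob hom by (simp add: comp_assoc)
  finally show "cmp (cmp (\<psi> X) (\<phi> X)) (Fm \<xi>) = cmp (Hm \<xi>) (cmp (\<psi> X') (\<phi> X'))" .
qed

definition hcomp :: "('n \<Rightarrow> 'n) \<Rightarrow> ('b \<Rightarrow> 'b) \<Rightarrow> ('b \<Rightarrow> 'n) \<Rightarrow> ('b \<Rightarrow> 'n) \<Rightarrow> 'b \<Rightarrow> 'n" where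
  "hcomp Gm F' \<phi> \<psi> X = cmp (Gm (\<psi> X)) (\<phi> (F' X))"

lemma hcomp_restrict_left: "F' X \<in> Ob \<Longrightarrow> hcomp Gm F' (restrict \<phi> Ob) \<psi> X = hcomp Gm F' \<phi> \<psi> X"
  by (simp add: hcomp_def)

lemma hcomp_restrict_right: "X \<in> Ob \<Longrightarrow> hcomp Gm F' \<phi> (restrict \<psi> Ob) X = hcomp Gm F' \<phi> \<psi> X"
  by (simp add: hcomp_def)

lemma hcomp_identity:
  assumes "endofunctor G Gm" "endofunctor F' Fm'" "X \<in> Ob"
  shows "hcomp Gm F' (\<lambda>X. idm (G X)) (\<lambda>X. idm (F' X)) X = idm (G (F' X))"
proof -
  have "G (F' X) \<in> Ob"
    using assms by (blast intro: endofunctor_ob)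
  with assms show ?thesis
    by (simp add: hcomp_def endofunctor_id endofunctor_ob comp_id_left[OF id_hom])
qed

lemma hcomp_commute:
  assumes "natural F Fm G Gm \<phi>" "endofunctor F' Fm'" "endofunctor G' Gm'"
    and "natural F' Fm' G' Gm' \<psi>" "X \<in> Ob"
  shows "hcomp Gm F' \<phi> \<psi> X = cmp (\<phi> (G' X)) (Fm (\<psi> X))"
proof -
  have "\<psi> X \<in> Hom (F' X) (G' X)" "F' X \<in> Ob" "G' X \<in> Ob"
    using assms by (blast intro: natural_hom endofunctor_ob)+
  then show ?thesis
    using natural_commute[OF assms(1)] by (simp add: hcomp_def)
qed

lemma natural_hcomp:
  assumes F: "endofunctor F Fm" and G: "endofunctor G Gm"
    and F': "endofunctor F' Fm'" and G': "endofunctor G' Gm'"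
    and \<phi>: "natural F Fm G Gm \<phi>" and \<psi>: "natural F' Fm' G' Gm' \<psi>"
  shows "natural (F \<circ> F') (Fm \<circ> Fm') (G \<circ> G') (Gm \<circ> Gm') (hcomp Gm F' \<phi> \<psi>)"
  unfolding natural_def
proof (intro conjI ballI)
  fix X assume "X \<in> Ob"
  then show "hcomp Gm F' \<phi> \<psi> X \<in> Hom ((F \<circ> F') X) ((G \<circ> G') X)"
    unfolding hcomp_def o_def
    by (meson comp_hom endofunctor_ob endofunctor_hom natural_hom F G F' G' \<phi> \<psi>)
next
  fix X X' \<xi> assume X: "X \<in> Ob" "X' \<in> Ob" and \<xi>: "\<xi> \<in> Hom X' X"
  have ob: "F' X \<in> Ob" "F' X' \<in> Ob" "G' X \<in> Ob" "G' X' \<in> Ob"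
    "F (F' X) \<in> Ob" "F (F' X') \<in> Ob" "G (F' X) \<in> Ob" "G (F' X') \<in> Ob"
    "G (G' X) \<in> Ob" "G (G' X') \<in> Ob"
    using X F G F' G' by (blast intro: endofunctor_ob)+
  have hom: "\<psi> X \<in> Hom (F' X) (G' X)" "\<psi> X' \<in> Hom (F' X') (G' X')"
    "Fm' \<xi> \<in> Hom (F' X') (F' X)" "Gm' \<xi> \<in> Hom (G' X') (G' X)"
    "\<phi> (F' X) \<in> Hom (F (F' X)) (G (F' X))" "\<phi> (F' X') \<in> Hom (F (F' X')) (G (F' X'))"
    "Fm (Fm' \<xi>) \<in> Hom (F (F' X')) (F (F' X))" "Gm (Fm' \<xi>) \<in> Hom (G (F' X')) (G (F' X))"
    "Gm (\<psi> X) \<in> Hom (G (F' X)) (G (G' X))" "Gm (\<psi> X') \<in> Hom (G (F' X')) (G (G' X'))"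
    "Gm (Gm' \<xi>) \<in> Hom (G (G' X')) (G (G' X))"
    using X \<xi> ob F G F' G' \<phi> \<psi> by (blast intro: natural_hom endofunctor_hom)+
  have "cmp (hcomp Gm F' \<phi> \<psi> X) (Fm (Fm' \<xi>)) = cmp (Gm (\<psi> X)) (cmp (\<phi> (F' X)) (Fm (Fm' \<xi>)))"
    using ob hom by (simp add: hcomp_def comp_assoc)
  also have "\<dots> = cmp (Gm (\<psi> X)) (cmp (Gm (Fm' \<xi>)) (\<phi> (F' X')))"
    using ob hom \<phi> by (simp add: natural_commute)
  also have "\<dots> = cmp (Gm (cmp (\<psi> X) (Fm' \<xi>))) (\<phi> (F' X'))"
    using ob hom G by (simp add: comp_assoc endofunctor_comp)
  also have "\<dots> = cmp (Gm (cmp (Gm' \<xi>) (\<psi> X'))) (\<phi> (F' X'))"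
    using X \<xi> \<psi> by (simp add: natural_commute)
  also have "\<dots> = cmp (Gm (Gm' \<xi>)) (hcomp Gm F' \<phi> \<psi> X')"
    using ob hom G by (simp add: hcomp_def comp_assoc endofunctor_comp)
  finally show "cmp (hcomp Gm F' \<phi> \<psi> X) ((Fm \<circ> Fm') \<xi>)
      = cmp ((Gm \<circ> Gm') \<xi>) (hcomp Gm F' \<phi> \<psi> X')"
    by simp
qed

lemma hcomp_vcomp:
  assumes F: "endofunctor F Fm" and G: "endofunctor G Gm" and H: "endofunctor H Hm"
    and F': "endofunctor F' Fm'" and G': "endofunctor G' Gm'" and H': "endofunctor H' Hm'"
    and \<phi>: "natural F Fm G Gm \<phi>" and \<phi>': "natural G Gm H Hm \<phi>'"
    and \<psi>: "natural F' Fm' G' Gm' \<psi>" and \<psi>': "natural G' Gm' H' Hm' \<psi>'"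
    and X: "X \<in> Ob"
  shows "hcomp Hm F' (\<lambda>Y. cmp (\<phi>' Y) (\<phi> Y)) (\<lambda>Y. cmp (\<psi>' Y) (\<psi> Y)) X
       = cmp (hcomp Hm G' \<phi>' \<psi>' X) (hcomp Gm F' \<phi> \<psi> X)"
proof -
  have ob: "F' X \<in> Ob" "G' X \<in> Ob" "H' X \<in> Ob" "F (F' X) \<in> Ob" "G (F' X) \<in> Ob"
    "H (F' X) \<in> Ob" "G (G' X) \<in> Ob" "H (G' X) \<in> Ob" "H (H' X) \<in> Ob"
    using X F G H F' G' H' by (blast intro: endofunctor_ob)+
  have hom: "\<psi> X \<in> Hom (F' X) (G' X)" "\<psi>' X \<in> Hom (G' X) (H' X)"
    "\<phi> (F' X) \<in> Hom (F (F' X)) (G (F' X))" "\<phi>' (F' X) \<in> Hom (G (F' X)) (H (F' X))"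
    "\<phi>' (G' X) \<in> Hom (G (G' X)) (H (G' X))"
    "Gm (\<psi> X) \<in> Hom (G (F' X)) (G (G' X))" "Hm (\<psi> X) \<in> Hom (H (F' X)) (H (G' X))"
    "Hm (\<psi>' X) \<in> Hom (H (G' X)) (H (H' X))"
    using X ob G H \<phi> \<phi>' \<psi> \<psi>' by (blast intro: natural_hom endofunctor_hom)+
  have "hcomp Hm F' (\<lambda>Y. cmp (\<phi>' Y) (\<phi> Y)) (\<lambda>Y. cmp (\<psi>' Y) (\<psi> Y)) X
      = cmp (Hm (\<psi>' X)) (cmp (cmp (Hm (\<psi> X)) (\<phi>' (F' X))) (\<phi> (F' X)))"
    using ob hom H by (simp add: hcomp_def comp_assoc comp_hom endofunctor_comp)
  also have "\<dots> = cmp (Hm (\<psi>' X)) (cmp (cmp (\<phi>' (G' X)) (Gm (\<psi> X))) (\<phi> (F' X)))"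
    using hcomp_commute[OF \<phi>' F' G' \<psi> X] by (simp add: hcomp_def)
  also have "\<dots> = cmp (hcomp Hm G' \<phi>' \<psi>' X) (hcomp Gm F' \<phi> \<psi> X)"
    using ob hom by (simp add: hcomp_def comp_assoc comp_hom)
  finally show ?thesis .
qed

lemma hcomp_assoc:
  assumes F: "endofunctor F Fm" and G: "endofunctor G Gm"
    and F': "endofunctor F' Fm'" and G': "endofunctor G' Gm'" and F'': "endofunctor F'' Fm''"
    and G'': "endofunctor G'' Gm''"
    and \<phi>: "natural F Fm G Gm \<phi>" and \<psi>: "natural F' Fm' G' Gm' \<psi>" and \<chi>: "natural F'' Fm'' G'' Gm'' \<chi>"
    and X: "X \<in> Ob"
  shows "hcomp (Gm \<circ> Gm') F'' (hcomp Gm F' \<phi> \<psi>) \<chi> X = hcomp Gm (F' \<circ> F'') \<phi> (hcomp Gm' F'' \<psi> \<chi>) X"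
proof -
  have ob: "F'' X \<in> Ob" "G'' X \<in> Ob" "F' (F'' X) \<in> Ob" "G' (F'' X) \<in> Ob" "G' (G'' X) \<in> Ob"
    "F (F' (F'' X)) \<in> Ob" "G (F' (F'' X)) \<in> Ob" "G (G' (F'' X)) \<in> Ob" "G (G' (G'' X)) \<in> Ob"
    using X F G F' G' F'' G'' by (blast intro: endofunctor_ob)+
  have hom: "\<chi> X \<in> Hom (F'' X) (G'' X)" "\<psi> (F'' X) \<in> Hom (F' (F'' X)) (G' (F'' X))"
    "Gm' (\<chi> X) \<in> Hom (G' (F'' X)) (G' (G'' X))"
    "\<phi> (F' (F'' X)) \<in> Hom (F (F' (F'' X))) (G (F' (F'' X)))"
    "Gm (\<psi> (F'' X)) \<in> Hom (G (F' (F'' X))) (G (G' (F'' X)))"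
    "Gm (Gm' (\<chi> X)) \<in> Hom (G (G' (F'' X))) (G (G' (G'' X)))"
    using X ob G G' \<phi> \<psi> \<chi> by (blast intro: natural_hom endofunctor_hom)+
  show ?thesis
    using ob hom G by (simp add: hcomp_def comp_assoc endofunctor_comp)
qed

end

locale left_module =
  fixes ObO :: "'o set" and HomO :: "'o \<Rightarrow> 'o \<Rightarrow> 'm set" and compO :: "'m \<Rightarrow> 'm \<Rightarrow> 'm"
    and idO :: "'o \<Rightarrow> 'm" and tensO :: "'o \<Rightarrow> 'o \<Rightarrow> 'o" and tensmO :: "'m \<Rightarrow> 'm \<Rightarrow> 'm"
    and I :: 'o
    and ObB :: "'b set" and HomB :: "'b \<Rightarrow> 'b \<Rightarrow> 'n set" and compB :: "'n \<Rightarrow> 'n \<Rightarrow> 'n"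
    and idB :: "'b \<Rightarrow> 'n" and act :: "'o \<Rightarrow> 'b \<Rightarrow> 'b" and actm :: "'m \<Rightarrow> 'n \<Rightarrow> 'n"
  assumes module: "strict_left_module ObO HomO compO idO tensO tensmO I ObB HomB compB idB act actm"
begin

lemma monoidal: "strict_monoidal ObO HomO compO idO tensO tensmO I"
  using module by (simp add: strict_left_module_def)

sublocale O: cat ObO HomO compO idO
  using monoidal unfolding strict_monoidal_def by unfold_locales blast

sublocale B: cat ObB HomB compB idB
  using module unfolding strict_left_module_def by unfold_locales blast

lemma unit_ob: "I \<in> ObO"
  using monoidal by (simp add: strict_monoidal_def)

lemma tens_ob: "\<lbrakk>A \<in> ObO; B \<in> ObO\<rbrakk> \<Longrightarrow> tensO A B \<in> ObO"
  using monoidal by (simp add: strict_monoidal_def)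

lemma tens_assoc: "\<lbrakk>A \<in> ObO; B \<in> ObO; C \<in> ObO\<rbrakk> \<Longrightarrow> tensO (tensO A B) C = tensO A (tensO B C)"
  using monoidal by (simp add: strict_monoidal_def)

lemma tens_unit_left: "A \<in> ObO \<Longrightarrow> tensO I A = A"
  using monoidal by (simp add: strict_monoidal_def)

lemma tens_unit_right: "A \<in> ObO \<Longrightarrow> tensO A I = A"
  using monoidal by (simp add: strict_monoidal_def)

lemma tensm_id: "\<lbrakk>A \<in> ObO; B \<in> ObO\<rbrakk> \<Longrightarrow> tensmO (idO A) (idO B) = idO (tensO A B)"
  using monoidal by (simp add: strict_monoidal_def)

lemma act_ob: "\<lbrakk>A \<in> ObO; X \<in> ObB\<rbrakk> \<Longrightarrow> act A X \<in> ObB"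
  using module by (simp add: strict_left_module_def)

lemma act_tens: "\<lbrakk>A \<in> ObO; B \<in> ObO; X \<in> ObB\<rbrakk> \<Longrightarrow> act (tensO A B) X = act A (act B X)"
  using module by (simp add: strict_left_module_def)

lemma act_unit: "X \<in> ObB \<Longrightarrow> act I X = X"
  using module by (simp add: strict_left_module_def)

lemma actm_hom:
  "\<lbrakk>A \<in> ObO; C \<in> ObO; X \<in> ObB; Y \<in> ObB; f \<in> HomO A C; \<xi> \<in> HomB X Y\<rbrakk>
   \<Longrightarrow> actm f \<xi> \<in> HomB (act A X) (act C Y)"
  using module by (simp add: strict_left_module_def)

lemma actm_id: "\<lbrakk>A \<in> ObO; X \<in> ObB\<rbrakk> \<Longrightarrow> actm (idO A) (idB X) = idB (act A X)"
  using module by (simp add: strict_left_module_def)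

lemma actm_comp:
  "\<lbrakk>A \<in> ObO; C \<in> ObO; E \<in> ObO; X \<in> ObB; Y \<in> ObB; Z \<in> ObB;
    f \<in> HomO A C; f' \<in> HomO C E; \<xi> \<in> HomB X Y; \<xi>' \<in> HomB Y Z\<rbrakk>
   \<Longrightarrow> actm (compO f' f) (compB \<xi>' \<xi>) = compB (actm f' \<xi>') (actm f \<xi>)"
  using module by (simp add: strict_left_module_def)

lemma actm_tens:
  "\<lbrakk>A \<in> ObO; A' \<in> ObO; B \<in> ObO; B' \<in> ObO; X \<in> ObB; X' \<in> ObB;
    f \<in> HomO A A'; g \<in> HomO B B'; \<xi> \<in> HomB X X'\<rbrakk>
   \<Longrightarrow> actm (tensmO f g) \<xi> = actm f (actm g \<xi>)"
  using module by (simp add: strict_left_module_def)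

abbreviation whisker :: "'o \<Rightarrow> 'n \<Rightarrow> 'n" where
  "whisker A \<equiv> actm (idO A)"

lemma whisker_endofunctor:
  assumes A: "A \<in> ObO"
  shows "B.endofunctor (act A) (whisker A)"
  unfolding B.endofunctor_def
proof (intro conjI ballI)
  fix X Y Z \<xi> \<eta> assume "X \<in> ObB" "Y \<in> ObB" "Z \<in> ObB" "\<xi> \<in> HomB X Y" "\<eta> \<in> HomB Y Z"
  then show "whisker A (compB \<eta> \<xi>) = compB (whisker A \<eta>) (whisker A \<xi>)"
    using actm_comp[OF A A A _ _ _ O.id_hom[OF A] O.id_hom[OF A]]
      O.comp_id_left[OF O.id_hom[OF A] A A]
    by simp
qed (simp_all add: A act_ob actm_hom actm_id O.id_hom)

lemma whisker_tens:
  "\<lbrakk>\<xi> \<in> HomB X Y; A \<in> ObO; B \<in> ObO; X \<in> ObB; Y \<in> ObB\<rbrakk>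
   \<Longrightarrow> whisker (tensO A B) \<xi> = whisker A (whisker B \<xi>)"
  by (simp add: actm_tens O.id_hom flip: tensm_id)

lemma whisker_unit: "\<lbrakk>\<xi> \<in> HomB X Y; X \<in> ObB; Y \<in> ObB\<rbrakk> \<Longrightarrow> whisker I \<xi> = \<xi>"
  using module by (simp add: strict_left_module_def)

abbreviation bar_hom :: "'o \<Rightarrow> 'o \<Rightarrow> ('o \<times> 'o \<times> ('b \<Rightarrow> 'n)) set" where
  "bar_hom \<equiv> barHom ObB HomB compB idO act actm"

abbreviation bar_comp where "bar_comp \<equiv> barComp ObB compB"

abbreviation bar_id where "bar_id \<equiv> barId ObB idB act"

abbreviation bar_tens where "bar_tens \<equiv> barTens ObB compB idO tensO act actm"

lemma bar_hom_iff:
  "(A', C', \<phi>) \<in> bar_hom A C \<longleftrightarrow>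
     A' = A \<and> C' = C \<and> B.natural (act A) (whisker A) (act C) (whisker C) \<phi> \<and> \<phi> \<in> extensional ObB"
  unfolding barHom_def B.natural_def extensional_def by auto

lemma bar_homE:
  assumes "f \<in> bar_hom A C"
  obtains \<phi> where "f = (A, C, \<phi>)" "B.natural (act A) (whisker A) (act C) (whisker C) \<phi>"
    "\<phi> \<in> extensional ObB"
  using assms bar_hom_iff unfolding barHom_def by blast

lemma bar_comp_eq: "bar_comp (B, C, \<psi>) (A, B, \<phi>) = (A, C, \<lambda>X\<in>ObB. compB (\<psi> X) (\<phi> X))"
  by (simp add: barComp_def restrict_def cong: if_cong)

lemma bar_id_eq: "bar_id A = (A, A, \<lambda>X\<in>ObB. idB (act A X))"
  by (simp add: barId_def restrict_def)

lemma bar_tens_eq: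
  "bar_tens (A, C, \<phi>) (B, D, \<psi>)
     = (tensO A B, tensO C D, \<lambda>X\<in>ObB. B.hcomp (whisker C) (act B) \<phi> \<psi> X)"
  by (simp add: barTens_def B.hcomp_def restrict_def)

lemma bar_id_hom: "A \<in> ObO \<Longrightarrow> bar_id A \<in> bar_hom A A"
  by (simp add: bar_id_eq bar_hom_iff B.natural_restrict B.natural_identity whisker_endofunctor)

lemma bar_comp_hom:
  assumes "A \<in> ObO" "B \<in> ObO" "C \<in> ObO" "f \<in> bar_hom A B" "g \<in> bar_hom B C"
  shows "bar_comp g f \<in> bar_hom A C"
  using assms(4,5)
proof (elim bar_homE)
  fix \<phi> \<psi>
  assume "f = (A, B, \<phi>)" "B.natural (act A) (whisker A) (act B) (whisker B) \<phi>"
    and "g = (B, C, \<psi>)" "B.natural (act B) (whisker B) (act C) (whisker C) \<psi>"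
  with assms(1-3) show ?thesis
    by (simp add: bar_comp_eq bar_hom_iff B.natural_restrict
        B.natural_vcomp[OF whisker_endofunctor whisker_endofunctor whisker_endofunctor])
qed

lemma bar_comp_id_right:
  assumes "f \<in> bar_hom A B" "A \<in> ObO" "B \<in> ObO"
  shows "bar_comp f (bar_id A) = f"
  using assms(1)
proof (elim bar_homE)
  fix \<phi> assume "f = (A, B, \<phi>)" "B.natural (act A) (whisker A) (act B) (whisker B) \<phi>"
    "\<phi> \<in> extensional ObB"
  with assms(2,3) show ?thesis
    by (simp add: bar_id_eq bar_comp_eq extensional_restrict
        B.natural_vcomp_id_right[OF _ whisker_endofunctor whisker_endofunctor] cong: restrict_cong)
qed

lemma bar_comp_id_left:
  assumes "f \<in> bar_hom A B" "A \<in> ObO" "B \<in> ObO"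
  shows "bar_comp (bar_id B) f = f"
  using assms(1)
proof (elim bar_homE)
  fix \<phi> assume "f = (A, B, \<phi>)" "B.natural (act A) (whisker A) (act B) (whisker B) \<phi>"
    "\<phi> \<in> extensional ObB"
  with assms(2,3) show ?thesis
    by (simp add: bar_id_eq bar_comp_eq extensional_restrict
        B.natural_vcomp_id_left[OF _ whisker_endofunctor whisker_endofunctor] cong: restrict_cong)
qed

lemma bar_comp_assoc:
  assumes "f \<in> bar_hom A B" "g \<in> bar_hom B C" "h \<in> bar_hom C D"
    and "A \<in> ObO" "B \<in> ObO" "C \<in> ObO" "D \<in> ObO"
  shows "bar_comp h (bar_comp g f) = bar_comp (bar_comp h g) f"
  using assms(1-3)
proof (elim bar_homE)
  fix \<phi> \<psi> \<chi>
  assume "f = (A, B, \<phi>)" "B.natural (act A) (whisker A) (act B) (whisker B) \<phi>"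
    and "g = (B, C, \<psi>)" "B.natural (act B) (whisker B) (act C) (whisker C) \<psi>"
    and "h = (C, D, \<chi>)" "B.natural (act C) (whisker C) (act D) (whisker D) \<chi>"
  with assms(4-7) show ?thesis
    by (simp add: bar_comp_eq B.natural_vcomp_assoc[OF _ _ _ whisker_endofunctor whisker_endofunctor
          whisker_endofunctor whisker_endofunctor] cong: restrict_cong)
qed

lemma bar_tens_hom:
  assumes "f \<in> bar_hom A C" "g \<in> bar_hom B D" "A \<in> ObO" "B \<in> ObO" "C \<in> ObO" "D \<in> ObO"
  shows "bar_tens f g \<in> bar_hom (tensO A B) (tensO C D)"
  using assms(1,2)
proof (elim bar_homE)
  fix \<phi> \<psi>
  assume "f = (A, C, \<phi>)" "B.natural (act A) (whisker A) (act C) (whisker C) \<phi>"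
    and "g = (B, D, \<psi>)" "B.natural (act B) (whisker B) (act D) (whisker D) \<psi>"
  moreover from calculation assms(3-6)
  have "B.natural (act A \<circ> act B) (whisker A \<circ> whisker B) (act C \<circ> act D) (whisker C \<circ> whisker D)
      (B.hcomp (whisker C) (act B) \<phi> \<psi>)"
    by (simp add: B.natural_hcomp whisker_endofunctor)
  then have "B.natural (act (tensO A B)) (whisker (tensO A B)) (act (tensO C D)) (whisker (tensO C D))
      (B.hcomp (whisker C) (act B) \<phi> \<psi>)"
    by (rule B.natural_cong) (simp_all add: assms act_tens whisker_tens)
  ultimately show ?thesis
    by (simp add: bar_tens_eq bar_hom_iff B.natural_restrict)
qed

lemma bar_tens_id:
  assumes "A \<in> ObO" "B \<in> ObO"
  shows "bar_tens (bar_id A) (bar_id B) = bar_id (tensO A B)"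
  using assms
  by (simp add: bar_id_eq bar_tens_eq B.hcomp_restrict_left B.hcomp_restrict_right act_ob act_tens
      B.hcomp_identity[OF whisker_endofunctor whisker_endofunctor] cong: restrict_cong)

lemma bar_interchange:
  assumes "f \<in> bar_hom A C" "f' \<in> bar_hom C E" "g \<in> bar_hom B D" "g' \<in> bar_hom D F"
    and "A \<in> ObO" "B \<in> ObO" "C \<in> ObO" "D \<in> ObO" "E \<in> ObO" "F \<in> ObO"
  shows "bar_tens (bar_comp f' f) (bar_comp g' g) = bar_comp (bar_tens f' g') (bar_tens f g)"
  using assms(1-4)
proof (elim bar_homE)
  fix \<phi> \<phi>' \<psi> \<psi>'
  assume "f = (A, C, \<phi>)" "B.natural (act A) (whisker A) (act C) (whisker C) \<phi>"
    and "f' = (C, E, \<phi>')" "B.natural (act C) (whisker C) (act E) (whisker E) \<phi>'"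
    and "g = (B, D, \<psi>)" "B.natural (act B) (whisker B) (act D) (whisker D) \<psi>"
    and "g' = (D, F, \<psi>')" "B.natural (act D) (whisker D) (act F) (whisker F) \<psi>'"
  with assms(5-10) show ?thesis
    by (simp add: bar_comp_eq bar_tens_eq B.hcomp_restrict_left B.hcomp_restrict_right act_ob
        B.hcomp_vcomp[OF whisker_endofunctor whisker_endofunctor whisker_endofunctor
          whisker_endofunctor whisker_endofunctor whisker_endofunctor] cong: restrict_cong)
qed

lemma bar_tens_assoc:
  assumes "f \<in> bar_hom A A'" "g \<in> bar_hom B B'" "h \<in> bar_hom C C'"
    and A: "A \<in> ObO" and A': "A' \<in> ObO" and B: "B \<in> ObO" and B': "B' \<in> ObO"
    and C: "C \<in> ObO" and C': "C' \<in> ObO"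
  shows "bar_tens (bar_tens f g) h = bar_tens f (bar_tens g h)"
  using assms(1-3)
proof (elim bar_homE)
  fix \<phi> \<psi> \<chi>
  assume "f = (A, A', \<phi>)" and \<phi>: "B.natural (act A) (whisker A) (act A') (whisker A') \<phi>"
    and "g = (B, B', \<psi>)" and \<psi>: "B.natural (act B) (whisker B) (act B') (whisker B') \<psi>"
    and "h = (C, C', \<chi>)" and \<chi>: "B.natural (act C) (whisker C) (act C') (whisker C') \<chi>"
  have "B.hcomp (whisker (tensO A' B')) (act C) (B.hcomp (whisker A') (act B) \<phi> \<psi>) \<chi> X
      = B.hcomp (whisker A') (act (tensO B C)) \<phi> (B.hcomp (whisker B') (act C) \<psi> \<chi>) X"
    if X: "X \<in> ObB" for X
  proof -
    have "B.hcomp (whisker (tensO A' B')) (act C) (B.hcomp (whisker A') (act B) \<phi> \<psi>) \<chi> X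
        = B.hcomp (whisker A' \<circ> whisker B') (act C) (B.hcomp (whisker A') (act B) \<phi> \<psi>) \<chi> X"
      using assms X B.natural_hom[OF \<chi> X] by (simp add: B.hcomp_def whisker_tens act_ob)
    also have "\<dots> = B.hcomp (whisker A') (act B \<circ> act C) \<phi> (B.hcomp (whisker B') (act C) \<psi> \<chi>) X"
      using B.hcomp_assoc[OF whisker_endofunctor[OF A] whisker_endofunctor[OF A']
          whisker_endofunctor[OF B] whisker_endofunctor[OF B'] whisker_endofunctor[OF C]
          whisker_endofunctor[OF C'] \<phi> \<psi> \<chi> X] .
    also have "\<dots> = B.hcomp (whisker A') (act (tensO B C)) \<phi> (B.hcomp (whisker B') (act C) \<psi> \<chi>) X"
      using assms X by (simp add: B.hcomp_def act_tens)
    finally show ?thesis .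
  qed
  with assms(4-9) \<open>f = (A, A', \<phi>)\<close> \<open>g = (B, B', \<psi>)\<close> \<open>h = (C, C', \<chi>)\<close> show ?thesis
    by (simp add: bar_tens_eq tens_assoc B.hcomp_restrict_left B.hcomp_restrict_right act_ob
        cong: restrict_cong)
qed

lemma bar_tens_unit_left:
  assumes "f \<in> bar_hom A B" "A \<in> ObO" "B \<in> ObO"
  shows "bar_tens (bar_id I) f = f"
  using assms(1)
proof (elim bar_homE)
  fix \<phi> assume "f = (A, B, \<phi>)" and \<phi>: "B.natural (act A) (whisker A) (act B) (whisker B) \<phi>"
    and "\<phi> \<in> extensional ObB"
  moreover have "B.hcomp (whisker I) (act A) (\<lambda>X\<in>ObB. idB (act I X)) \<phi> X = \<phi> X" if "X \<in> ObB" for X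
    using assms that B.natural_hom[OF \<phi> that]
    by (simp add: B.hcomp_def act_ob act_unit whisker_unit
        B.natural_vcomp_id_right[OF \<phi> whisker_endofunctor whisker_endofunctor])
  ultimately show ?thesis
    using assms(2,3) unit_ob
    by (simp add: bar_id_eq bar_tens_eq tens_unit_left extensional_restrict cong: restrict_cong)
qed

lemma bar_tens_unit_right:
  assumes "f \<in> bar_hom A B" "A \<in> ObO" "B \<in> ObO"
  shows "bar_tens f (bar_id I) = f"
  using assms(1)
proof (elim bar_homE)
  fix \<phi> assume "f = (A, B, \<phi>)" and \<phi>: "B.natural (act A) (whisker A) (act B) (whisker B) \<phi>"
    and "\<phi> \<in> extensional ObB"
  moreover have "B.hcomp (whisker B) (act I) \<phi> (\<lambda>X\<in>ObB. idB (act I X)) X = \<phi> X" if "X \<in> ObB" for X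
    using assms that
    by (simp add: B.hcomp_def act_unit actm_id
        B.natural_vcomp_id_left[OF \<phi> whisker_endofunctor whisker_endofunctor])
  ultimately show ?thesis
    using assms(2,3) unit_ob
    by (simp add: bar_id_eq bar_tens_eq tens_unit_right extensional_restrict cong: restrict_cong)
qed

lemma bar_tens_components_commute:
  assumes "(A, C, \<phi>) \<in> bar_hom A C" "(B, D, \<psi>) \<in> bar_hom B D"
    and "A \<in> ObO" "B \<in> ObO" "C \<in> ObO" "D \<in> ObO" "X \<in> ObB"
  shows "compB (whisker C (\<psi> X)) (\<phi> (act B X)) = compB (\<phi> (act D X)) (whisker A (\<psi> X))"
proof -
  from assms(1,2) have "B.natural (act A) (whisker A) (act C) (whisker C) \<phi>"
    and "B.natural (act B) (whisker B) (act D) (whisker D) \<psi>"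
    by (simp_all add: bar_hom_iff)
  with assms(4,6,7) show ?thesis
    using B.hcomp_commute[OF _ whisker_endofunctor whisker_endofunctor] by (simp add: B.hcomp_def)
qed

lemma bar_strict_monoidal:
  "strict_monoidal ObO bar_hom bar_comp bar_id tensO bar_tens I"
  unfolding strict_monoidal_def category_def
  by (intro conjI ballI)
    (assumption | rule unit_ob tens_ob tens_assoc tens_unit_left tens_unit_right
      bar_id_hom bar_comp_hom bar_comp_id_right bar_comp_id_left bar_comp_assoc
      bar_tens_hom bar_tens_id bar_interchange bar_tens_assoc bar_tens_unit_left bar_tens_unit_right)+

end

theorem proposition4p15:
  fixes ObO :: "'o set" and HomO :: "'o \<Rightarrow> 'o \<Rightarrow> 'm set" and compO :: "'m \<Rightarrow> 'm \<Rightarrow> 'm"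
    and idO :: "'o \<Rightarrow> 'm" and tensO :: "'o \<Rightarrow> 'o \<Rightarrow> 'o" and tensmO :: "'m \<Rightarrow> 'm \<Rightarrow> 'm"
    and I :: 'o
    and ObB :: "'b set" and HomB :: "'b \<Rightarrow> 'b \<Rightarrow> 'n set" and compB :: "'n \<Rightarrow> 'n \<Rightarrow> 'n"
    and idB :: "'b \<Rightarrow> 'n" and act :: "'o \<Rightarrow> 'b \<Rightarrow> 'b" and actm :: "'m \<Rightarrow> 'n \<Rightarrow> 'n"
  assumes "strict_left_module ObO HomO compO idO tensO tensmO I ObB HomB compB idB act actm"
  shows "(\<forall>A\<in>ObO. \<forall>B\<in>ObO. \<forall>C\<in>ObO. \<forall>D\<in>ObO. \<forall>\<phi> \<psi>.
            (A, C, \<phi>) \<in> barHom ObB HomB compB idO act actm A C \<longrightarrow>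
            (B, D, \<psi>) \<in> barHom ObB HomB compB idO act actm B D \<longrightarrow>
            (\<forall>X\<in>ObB. compB (actm (idO C) (\<psi> X)) (\<phi> (act B X))
                     = compB (\<phi> (act D X)) (actm (idO A) (\<psi> X))))
       \<and> strict_monoidal ObO (barHom ObB HomB compB idO act actm) (barComp ObB compB)
           (barId ObB idB act) tensO (barTens ObB compB idO tensO act actm) I"
proof -
  interpret left_module ObO HomO compO idO tensO tensmO I ObB HomB compB idB act actm
    using assms by (rule left_module.intro)
  show ?thesis
    using bar_tens_components_commute bar_strict_monoidal by blast
qed

end
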